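(* Let $\mathcal{P}$ be a ${\rm DLP}^{<}$ program consisting of a single object $o=(oid(o),\Sigma(o))$. Then a set $M$ of ground literals is a (${\rm DLP}^{<}$-)answer set of $\mathcal{P}$ if and only if $M$ is a consistent answer set of the extended disjunctive logic program $\Sigma(o)$ in the sense of Gelfond and Lifschitz.
   Context: Syntax. Fix pairwise disjoint sets of variables, predicates and constants (no function symbols). A literal is an atom $p(t_1,\dots,t_n)$ or its strong negation $\neg p(t_1,\dots,t_n)$; $\neg.L$ denotes the complementary literal of $L$. A rule has the form $a_1\vee\dots\vee a_n \leftarrow b_1,\dots,b_k,\ \mathtt{not}\ b_{k+1},\dots,\mathtt{not}\ b_m$ (in ${\rm DLP}^{<}$ terminated by "." for defeasible or "!" for strict; with a single object the marker is irrelevant), $n\ge1$, $m\ge0$; $Head(r)=\{a_1,\dots,a_n\}$, $Body^+(r)=\{b_1,\dots,b_k\}$, $Body^-(r)=\{b_{k+1},\dots,b_m\}$. A ${\rm DLP}^{<}$ program is a set of objects $(oid(o),\Sigma(o))$ (identifier, set of rules), partially ordered by a strict order $<$ on identifiers. ${\rm DLP}^{<}$ semantics. $B_{\mathcal{P}}$: all ground literals (positive and negative) from predicates of $\mathcal{P}$ and constants appearing in $\mathcal{P}$. $ground(\mathcal{P})$: multiset of ground instances of rules of all objects, each tagged with its object $obj\_of(r)$. An interpretation is a subset of $B_{\mathcal{P}}$ without complementary pair. Head of $r$ true in $I$: some head literal in $I$; body true: $Body^+(r)\subseteq I$, $Body^-(r)\cap I=\emptyset$; $r$ satisfied: head true or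 body not true. $r_1$ threatens $r_2$ on $L$ if $\neg.L\in Head(r_1)$, $L\in Head(r_2)$, $obj\_of(r_1)<obj\_of(r_2)$, $r_2$ defeasible; $r_1$ overrides $r_2$ on $L$ in $I$ if moreover $\neg.L\in I$ and the body of $r_2$ is true in $I$; $r$ is overridden in $I$ if every $L\in Head(r)$ is overridden by some rule. $I$ is a model of $\mathcal{P}$ if every rule of $ground(\mathcal{P})$ is satisfied or overridden. $G_I(\mathcal{P})$: from $ground(\mathcal{P})$ remove rules overridden in $I$, remove rules with $Body^-(r)\cap I\neq\emptyset$, delete all $\mathtt{not}$-parts. $pos(S)$ regards each $\neg p$ as a fresh positive predicate. A model $M$ of $\mathcal{P}$ is a ${\rm DLP}^{<}$-answer set if it is a subset-minimal model of $pos(G_M(\mathcal{P}))$. Gelfond–Lifschitz answer sets. Let $\Pi$ be a set of such rules (ground instances taken over its constants) and $Lit$ the set of all ground literals. For a $\mathtt{not}$-free $\Pi$, a set $S\subseteq Lit$ is an answer set if it is a subset-minimal set such that (i) for each ground rule, if $Body^+(r)\subseteq S$ then $Head(r)\cap S\neq\emptyset$, and (ii) if $S$ contains a complementary pair then $S=Lit$. For general $\Pi$ and $S\subseteq Lit$, $\Pi^S$ is obtained from the ground instances of $\Pi$ by deleting every rule with some $b\in Body^-(r)\cap S$ and deleting the $\mathtt{not}$-parts of the remaining rules; $S$ is an answer set of $\Pi$ if it is an answer set of $\Pi^S$. It is consistent if it contains no complementary pair. *)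

theory Defs
  imports Main
begin

datatype ('v, 'c) trm = Var 'v | Const 'c

text \<open>A literal: sign (True = atom, False = strongly negated atom), predicate, arguments.
  The argument type is either terms (non-ground) or constants (ground).\<close>
datatype ('p, 'a) lit = Lit (sign: bool) (pred: 'p) (args: "'a list")

fun compl :: "('p, 'a) lit \<Rightarrow> ('p, 'a) lit" where
  "compl (Lit s p as) = Lit (\<not> s) p as"

text \<open>A rule: head literals, positive body, default-negated body,
  and the marker (True = strict "!", False = defeasible ".").\<close>
datatype ('p, 'a) rule = Rule (head: "('p, 'a) lit list") (bpos: "('p, 'a) lit list")
                              (bneg: "('p, 'a) lit list") (strict: bool)

type_synonym ('p, 'v, 'c) nrule = "('p, ('v, 'c) trm) rule"

definition rule_lits :: "('p, 'a) rule \<Rightarrow> ('p, 'a) lit set" where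
  "rule_lits r = set (head r) \<union> set (bpos r) \<union> set (bneg r)"

definition rule_vars :: "('p, 'v, 'c) nrule \<Rightarrow> 'v set" where
  "rule_vars r = {v. \<exists>L \<in> rule_lits r. Var v \<in> set (args L)}"

definition rules_consts :: "('p, 'v, 'c) nrule set \<Rightarrow> 'c set" where
  "rules_consts R = {c. \<exists>r \<in> R. \<exists>L \<in> rule_lits r. Const c \<in> set (args L)}"

definition rules_preds :: "('p, 'v, 'c) nrule set \<Rightarrow> ('p \<times> nat) set" where
  "rules_preds R = {(pred L, length (args L)) | L r. r \<in> R \<and> L \<in> rule_lits r}"

definition lits_over :: "('p \<times> nat) set \<Rightarrow> 'c set \<Rightarrow> ('p, 'c) lit set" where
  "lits_over Ps C = {Lit s p as | s p as. (p, length as) \<in> Ps \<and> set as \<subseteq> C}"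

fun inst_trm :: "('v \<Rightarrow> 'c) \<Rightarrow> ('v, 'c) trm \<Rightarrow> 'c" where
  "inst_trm \<theta> (Var v) = \<theta> v"
| "inst_trm \<theta> (Const c) = c"

fun inst_lit :: "('v \<Rightarrow> 'c) \<Rightarrow> ('p, ('v, 'c) trm) lit \<Rightarrow> ('p, 'c) lit" where
  "inst_lit \<theta> (Lit s p ts) = Lit s p (map (inst_trm \<theta>) ts)"

fun inst_rule :: "('v \<Rightarrow> 'c) \<Rightarrow> ('p, 'v, 'c) nrule \<Rightarrow> ('p, 'c) rule" where
  "inst_rule \<theta> (Rule H P N s) = Rule (map (inst_lit \<theta>) H) (map (inst_lit \<theta>) P) (map (inst_lit \<theta>) N) s"

definition ground_over :: "'c set \<Rightarrow> ('p, 'v, 'c) nrule set \<Rightarrow> ('p, 'c) rule set" where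
  "ground_over C R = {inst_rule \<theta> r | \<theta> r. r \<in> R \<and> (\<forall>v \<in> rule_vars r. \<theta> v \<in> C)}"

definition consistent :: "('p, 'c) lit set \<Rightarrow> bool" where
  "consistent S \<longleftrightarrow> (\<forall>L \<in> S. compl L \<notin> S)"

definition strip :: "('p, 'c) rule \<Rightarrow> ('p, 'c) rule" where
  "strip r = Rule (head r) (bpos r) [] (strict r)"

text \<open>Satisfaction of a not-free rule set by a set of literals,
  literals being treated as atoms (this is pos(.)).\<close>
definition pos_closed :: "('p, 'c) rule set \<Rightarrow> ('p, 'c) lit set \<Rightarrow> bool" where
  "pos_closed R S \<longleftrightarrow> (\<forall>r \<in> R. set (bpos r) \<subseteq> S \<longrightarrow> set (head r) \<inter> S \<noteq> {})"

record ('i, 'p, 'v, 'c) prog =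
  objs :: "'i set"
  sigma :: "'i \<Rightarrow> ('p, 'v, 'c) nrule set"
  less :: "'i \<Rightarrow> 'i \<Rightarrow> bool"

definition wf_prog :: "('i, 'p, 'v, 'c) prog \<Rightarrow> bool" where
  "wf_prog P \<longleftrightarrow> (\<forall>ob \<in> objs P. \<forall>r \<in> sigma P ob. head r \<noteq> [])
     \<and> (\<forall>ob \<in> objs P. \<not> less P ob ob)
     \<and> (\<forall>o1 \<in> objs P. \<forall>o2 \<in> objs P. \<forall>o3 \<in> objs P. less P o1 o2 \<longrightarrow> less P o2 o3 \<longrightarrow> less P o1 o3)"

definition all_rules :: "('i, 'p, 'v, 'c) prog \<Rightarrow> ('p, 'v, 'c) nrule set" where
  "all_rules P = (\<Union>ob \<in> objs P. sigma P ob)"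

definition prog_consts :: "('i, 'p, 'v, 'c) prog \<Rightarrow> 'c set" where
  "prog_consts P = rules_consts (all_rules P)"

definition BP :: "('i, 'p, 'v, 'c) prog \<Rightarrow> ('p, 'c) lit set" where
  "BP P = lits_over (rules_preds (all_rules P)) (prog_consts P)"

definition ground_prog :: "('i, 'p, 'v, 'c) prog \<Rightarrow> ('i \<times> ('p, 'c) rule) set" where
  "ground_prog P = {(ob, g) | ob g. ob \<in> objs P \<and> g \<in> ground_over (prog_consts P) (sigma P ob)}"

definition interp :: "('i, 'p, 'v, 'c) prog \<Rightarrow> ('p, 'c) lit set \<Rightarrow> bool" where
  "interp P I \<longleftrightarrow> I \<subseteq> BP P \<and> consistent I"

definition head_true :: "('p, 'c) lit set \<Rightarrow> ('p, 'c) rule \<Rightarrow> bool" where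
  "head_true I r \<longleftrightarrow> set (head r) \<inter> I \<noteq> {}"

definition body_true :: "('p, 'c) lit set \<Rightarrow> ('p, 'c) rule \<Rightarrow> bool" where
  "body_true I r \<longleftrightarrow> set (bpos r) \<subseteq> I \<and> set (bneg r) \<inter> I = {}"

definition satisfied :: "('p, 'c) lit set \<Rightarrow> ('p, 'c) rule \<Rightarrow> bool" where
  "satisfied I r \<longleftrightarrow> head_true I r \<or> \<not> body_true I r"

definition threatens :: "('i, 'p, 'v, 'c) prog \<Rightarrow> 'i \<times> ('p, 'c) rule \<Rightarrow> 'i \<times> ('p, 'c) rule
    \<Rightarrow> ('p, 'c) lit \<Rightarrow> bool" where
  "threatens P t1 t2 L \<longleftrightarrow> compl L \<in> set (head (snd t1)) \<and> L \<in> set (head (snd t2))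
     \<and> less P (fst t1) (fst t2) \<and> \<not> strict (snd t2)"

definition overrides :: "('i, 'p, 'v, 'c) prog \<Rightarrow> ('p, 'c) lit set \<Rightarrow> 'i \<times> ('p, 'c) rule
    \<Rightarrow> 'i \<times> ('p, 'c) rule \<Rightarrow> ('p, 'c) lit \<Rightarrow> bool" where
  "overrides P I t1 t2 L \<longleftrightarrow> threatens P t1 t2 L \<and> compl L \<in> I \<and> body_true I (snd t2)"

definition overridden :: "('i, 'p, 'v, 'c) prog \<Rightarrow> ('p, 'c) lit set \<Rightarrow> 'i \<times> ('p, 'c) rule \<Rightarrow> bool" where
  "overridden P I t \<longleftrightarrow> (\<forall>L \<in> set (head (snd t)). \<exists>t1 \<in> ground_prog P. overrides P I t1 t L)"

definition is_model :: "('i, 'p, 'v, 'c) prog \<Rightarrow> ('p, 'c) lit set \<Rightarrow> bool" where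
  "is_model P I \<longleftrightarrow> interp P I \<and> (\<forall>t \<in> ground_prog P. satisfied I (snd t) \<or> overridden P I t)"

definition G_red :: "('i, 'p, 'v, 'c) prog \<Rightarrow> ('p, 'c) lit set \<Rightarrow> ('p, 'c) rule set" where
  "G_red P I = {strip (snd t) | t. t \<in> ground_prog P \<and> \<not> overridden P I t \<and> set (bneg (snd t)) \<inter> I = {}}"

definition dlp_answer_set :: "('i, 'p, 'v, 'c) prog \<Rightarrow> ('p, 'c) lit set \<Rightarrow> bool" where
  "dlp_answer_set P M \<longleftrightarrow> is_model P M \<and> pos_closed (G_red P M) M
     \<and> (\<forall>N. N \<subset> M \<longrightarrow> \<not> pos_closed (G_red P M) N)"

definition gl_Lit :: "('p, 'v, 'c) nrule set \<Rightarrow> ('p, 'c) lit set" where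
  "gl_Lit R = lits_over (rules_preds R) (rules_consts R)"

definition gl_closed :: "('p, 'c) lit set \<Rightarrow> ('p, 'c) rule set \<Rightarrow> ('p, 'c) lit set \<Rightarrow> bool" where
  "gl_closed LitU R S \<longleftrightarrow> pos_closed R S \<and> (\<not> consistent S \<longrightarrow> S = LitU)"

definition gl_answer_set_pos :: "('p, 'c) lit set \<Rightarrow> ('p, 'c) rule set \<Rightarrow> ('p, 'c) lit set \<Rightarrow> bool" where
  "gl_answer_set_pos LitU R S \<longleftrightarrow> S \<subseteq> LitU \<and> gl_closed LitU R S
     \<and> (\<forall>N. N \<subset> S \<longrightarrow> \<not> gl_closed LitU R N)"

definition gl_reduct :: "('p, 'v, 'c) nrule set \<Rightarrow> ('p, 'c) lit set \<Rightarrow> ('p, 'c) rule set" where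
  "gl_reduct R S = {strip r | r. r \<in> ground_over (rules_consts R) R \<and> set (bneg r) \<inter> S = {}}"

definition gl_answer_set :: "('p, 'v, 'c) nrule set \<Rightarrow> ('p, 'c) lit set \<Rightarrow> bool" where
  "gl_answer_set R S \<longleftrightarrow> gl_answer_set_pos (gl_Lit R) (gl_reduct R S) S"

end

theory Submission
  imports Defs
begin

text \<open>With a single object nothing can be overridden, since overriding needs a rule from a strictly
  smaller object. The overriding clause then disappears from both the model condition and the
  reduct, so G_M(P) is the Gelfond--Lifschitz reduct and a model is exactly a set closed under it.
  Consistency of M makes the clause "S = Lit for inconsistent S" vacuous on all subsets of M,
  and the two minimality conditions coincide.\<close>

lemma consistent_subset: "consistent M \<Longrightarrow> N \<subseteq> M \<Longrightarrow> consistent N"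
  unfolding consistent_def by blast

lemma head_inst_rule: "head (inst_rule \<theta> r) = map (inst_lit \<theta>) (head r)"
  by (cases r) simp

lemma ground_over_head_nonempty:
  assumes "\<forall>r \<in> R. head r \<noteq> []" and "g \<in> ground_over C R"
  shows "head g \<noteq> []"
  using assms by (auto simp: ground_over_def head_inst_rule)

lemma pos_closed_reduct_iff_satisfied:
  "pos_closed {strip r | r. r \<in> R \<and> set (bneg r) \<inter> S = {}} S \<longleftrightarrow> (\<forall>r \<in> R. satisfied S r)"
proof -
  have "strip r \<in> {strip r | r. r \<in> R \<and> set (bneg r) \<inter> S = {}}"
    if "r \<in> R" "set (bneg r) \<inter> S = {}" for r
    using that by blast
  then show ?thesis
    by (fastforce simp: pos_closed_def strip_def satisfied_def head_true_def body_true_def)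
qed

lemma pos_closed_gl_reduct_iff_satisfied:
  "pos_closed (gl_reduct R S) S \<longleftrightarrow> (\<forall>g \<in> ground_over (rules_consts R) R. satisfied S g)"
  unfolding gl_reduct_def by (rule pos_closed_reduct_iff_satisfied)

lemma gl_answer_set_pos_consistent_iff:
  assumes "consistent S"
  shows "gl_answer_set_pos LitU R S \<longleftrightarrow>
    S \<subseteq> LitU \<and> pos_closed R S \<and> (\<forall>N. N \<subset> S \<longrightarrow> \<not> pos_closed R N)"
  using assms consistent_subset by (auto simp: gl_answer_set_pos_def gl_closed_def)

lemma not_overridden_if_unordered:
  assumes heads: "\<forall>ob \<in> objs P. \<forall>r \<in> sigma P ob. head r \<noteq> []"
    and unordered: "\<forall>o1 \<in> objs P. \<forall>o2 \<in> objs P. \<not> less P o1 o2"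
    and t: "t \<in> ground_prog P"
  shows "\<not> overridden P I t"
proof -
  obtain ob g where t_eq: "t = (ob, g)" and ob: "ob \<in> objs P"
    and g: "g \<in> ground_over (prog_consts P) (sigma P ob)"
    using t by (auto simp: ground_prog_def)
  \<comment> \<open>a rule with empty head would count as overridden vacuously\<close>
  obtain L where L: "L \<in> set (head g)"
    using ground_over_head_nonempty[OF _ g] heads ob by (meson last_in_set)
  have "\<not> less P (fst t1) (fst t)" if "t1 \<in> ground_prog P" for t1
    using that unordered ob t_eq by (auto simp: ground_prog_def)
  then have "\<forall>t1 \<in> ground_prog P. \<not> overrides P I t1 t L"
    by (simp add: overrides_def threatens_def)
  then show ?thesis
    using L t_eq unfolding overridden_def by auto
qed

lemma G_red_if_unordered:
  assumes "\<forall>ob \<in> objs P. \<forall>r \<in> sigma P ob. head r \<noteq> []"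
    and "\<forall>o1 \<in> objs P. \<forall>o2 \<in> objs P. \<not> less P o1 o2"
  shows "G_red P I = {strip (snd t) | t. t \<in> ground_prog P \<and> set (bneg (snd t)) \<inter> I = {}}"
  using not_overridden_if_unordered[OF assms] unfolding G_red_def by blast

lemma is_model_if_unordered:
  assumes "\<forall>ob \<in> objs P. \<forall>r \<in> sigma P ob. head r \<noteq> []"
    and "\<forall>o1 \<in> objs P. \<forall>o2 \<in> objs P. \<not> less P o1 o2"
  shows "is_model P I \<longleftrightarrow> interp P I \<and> (\<forall>t \<in> ground_prog P. satisfied I (snd t))"
  using not_overridden_if_unordered[OF assms] by (auto simp: is_model_def)

lemma single_object_all_rules: "objs P = {ob} \<Longrightarrow> all_rules P = sigma P ob"
  by (simp add: all_rules_def)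

lemma single_object_prog_consts: "objs P = {ob} \<Longrightarrow> prog_consts P = rules_consts (sigma P ob)"
  by (simp add: prog_consts_def single_object_all_rules)

lemma single_object_BP: "objs P = {ob} \<Longrightarrow> BP P = gl_Lit (sigma P ob)"
  by (simp add: BP_def gl_Lit_def single_object_all_rules single_object_prog_consts)

lemma single_object_ground_prog:
  "objs P = {ob} \<Longrightarrow>
    ground_prog P = Pair ob ` ground_over (rules_consts (sigma P ob)) (sigma P ob)"
  by (auto simp: ground_prog_def single_object_prog_consts)

lemma single_object_G_red:
  assumes "wf_prog P" and "objs P = {ob}"
  shows "G_red P I = gl_reduct (sigma P ob) I"
  using assms by (auto simp: G_red_if_unordered wf_prog_def single_object_ground_prog gl_reduct_def)

lemma single_object_is_model:
  assumes "wf_prog P" and "objs P = {ob}"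
  shows "is_model P I \<longleftrightarrow>
    I \<subseteq> gl_Lit (sigma P ob) \<and> consistent I \<and> pos_closed (gl_reduct (sigma P ob) I) I"
  using assms
  by (auto simp: is_model_if_unordered wf_prog_def interp_def single_object_BP
      single_object_ground_prog pos_closed_gl_reduct_iff_satisfied)

theorem theorem6p1:
  fixes P :: "('i, 'p, 'v, 'c) prog" and ob :: 'i and M :: "('p, 'c) lit set"
  assumes "wf_prog P" and "objs P = {ob}"
  shows "dlp_answer_set P M \<longleftrightarrow> (gl_answer_set (sigma P ob) M \<and> consistent M)"
  using gl_answer_set_pos_consistent_iff
  by (auto simp: dlp_answer_set_def gl_answer_set_def single_object_is_model[OF assms]
      single_object_G_red[OF assms])

end
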